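(* For every order $p\le 44$ there exist splitting methods $$\Psi(h)=e^{hb_0B}\,e^{ha_1A}\,e^{hb_1B}\cdots e^{ha_sA}\,e^{hb_sB},\qquad a_i,b_i\in\mathbb{C},$$ of order $p$ with $\Re(a_i)\geq 0$ for all $i=1,\dots,s$.
   Context: A splitting method $\Psi(h)$ for $\dot u=Au+Bu$ is of order $p$ if, for arbitrary non-commuting operators $A$ and $B$, the formal expansion satisfies $\Psi(h)-e^{h(A+B)}=h^{p+1}E_{p+1}+h^{p+2}E_{p+2}+\cdots$. The coefficients $b_i$ are arbitrary complex numbers (no sign condition is imposed on them). *)

theory Defs
  imports Complex_Main
begin

text \<open>A formal power series in the free associative algebra generated by A, B (with the
  step size h counted by word length, i.e. h^k collects all words of length k) is
  represented by its coefficient function on words over the alphabet {A, B}.\<close>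

datatype letter = LA | LB

text \<open>Coefficient of the word w in the formal expansion of the product
  exp(h c_1 X_1) exp(h c_2 X_2) ... exp(h c_m X_m), given as the list of pairs (X_j, c_j).
  The exponential exp(h c X) contributes c^k h^k X^k / k!.\<close>

fun exp_prod_coeff :: "(letter \<times> complex) list \<Rightarrow> letter list \<Rightarrow> complex" where
  "exp_prod_coeff [] w = (if w = [] then 1 else 0)"
| "exp_prod_coeff ((X, c) # fs) w =
     (\<Sum>k\<in>{k. k \<le> length w \<and> take k w = replicate k X}.
        c ^ k / of_nat (fact k) * exp_prod_coeff fs (drop k w))"

text \<open>Coefficient of the word w in exp(h(A+B)) = sum_k h^k (A+B)^k / k!.\<close>

definition exact_coeff :: "letter list \<Rightarrow> complex" where
  "exact_coeff w = 1 / of_nat (fact (length w))"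

definition splitting_factors :: "nat \<Rightarrow> (nat \<Rightarrow> complex) \<Rightarrow> (nat \<Rightarrow> complex) \<Rightarrow> (letter \<times> complex) list" where
  "splitting_factors s a b = (LB, b 0) # concat (map (\<lambda>i. [(LA, a i), (LB, b i)]) [1..<s+1])"

text \<open>Order p: Psi(h) - exp(h(A+B)) = h^{p+1} E_{p+1} + ..., i.e. all coefficients of words
  of length at most p agree.\<close>

definition splitting_has_order :: "nat \<Rightarrow> nat \<Rightarrow> (nat \<Rightarrow> complex) \<Rightarrow> (nat \<Rightarrow> complex) \<Rightarrow> bool" where
  "splitting_has_order p s a b \<longleftrightarrow>
     (\<forall>w. length w \<le> p \<longrightarrow> exp_prod_coeff (splitting_factors s a b) w = exact_coeff w)"

end

theory Submission
  imports Defs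
begin

text \<open>For a
  product \<Psi> of exponentials, L = (h d/dh \<Psi>) \<Psi>^-1 is a Lie series, and \<Psi> has order p exactly when L
  agrees with A + B on all words of length at most p. Starting from e^A e^B, the order is raised
  one degree at a time: if the error of L in degree p + 1 \<ge> 2 is the Lie polynomial Z, append a
  product whose own L is -Z up to higher degrees. Such products exist for every Lie polynomial of
  degree at least 2, built from iterated group commutators e^(dX) Q e^(-dX) Q^-1 with leading term
  d[X, q]; taking d = i when X = A keeps all A-coefficients purely imaginary, so every A-coefficient
  of the final method has nonnegative real part.\<close>

datatype 'a series = Series (coeff: "'a list \<Rightarrow> complex")

lemma series_eqI: "(\<And>w. coeff f w = coeff g w) \<Longrightarrow> f = g"
  by (cases f; cases g) auto

instantiation series :: (type) ring_1
begin

definition "zero_series = Series (\<lambda>w. 0)"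
definition "one_series = Series (\<lambda>w. if w = [] then 1 else 0)"
definition "plus_series f g = Series (\<lambda>w. coeff f w + coeff g w)"
definition "minus_series f g = Series (\<lambda>w. coeff f w - coeff g w)"
definition "uminus_series f = Series (\<lambda>w. - coeff f w)"
definition "times_series f g = Series (\<lambda>w. \<Sum>i\<le>length w. coeff f (take i w) * coeff g (drop i w))"

lemma coeff_simps [simp]:
  "coeff 0 w = 0" "coeff 1 w = (if w = [] then 1 else 0)" "coeff (f + g) w = coeff f w + coeff g w"
  "coeff (f - g) w = coeff f w - coeff g w" "coeff (- f) w = - coeff f w"
  by (simp_all add: zero_series_def one_series_def plus_series_def minus_series_def uminus_series_def)

lemma coeff_times: "coeff (f * g) w = (\<Sum>i\<le>length w. coeff f (take i w) * coeff g (drop i w))"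
  by (simp add: times_series_def)

lemma times_series_assoc: "(f * g) * h = f * (g * (h :: 'a series))"
proof (rule series_eqI)
  fix w :: "'a list"
  let ?n = "length w"
  define F where "F j k = coeff f (take j w) * coeff g (take k (drop j w)) * coeff h (drop (j + k) w)"
    for j k
  have "coeff ((f * g) * h) w = (\<Sum>i\<le>?n. \<Sum>j\<le>i. F j (i - j))"
    by (auto simp: coeff_times F_def sum_distrib_right min_def take_drop intro!: sum.cong)
  also have "\<dots> = (\<Sum>(j, k)\<in>{(j, k). j + k \<le> ?n}. F j k)"
    by (rule sum.triangle_reindex_eq[symmetric])
  also have "\<dots> = (\<Sum>j\<le>?n. \<Sum>k\<le>?n - j. F j k)"
    by (auto simp: pairs_le_eq_Sigma sum.Sigma)
  also have "\<dots> = coeff (f * (g * h)) w"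
    by (auto simp: F_def coeff_times sum_distrib_left mult.assoc add.commute intro!: sum.cong)
  finally show "coeff ((f * g) * h) w = coeff (f * (g * h)) w" .
qed

instance
proof
  fix f g h :: "'a series"
  show "f * g * h = f * (g * h)" by (rule times_series_assoc)
  show "1 * f = f"
  proof (rule series_eqI)
    fix w :: "'a list"
    show "coeff (1 * f) w = coeff f w"
      by (cases w) (auto simp: coeff_times sum.atMost_Suc_shift simp del: sum.atMost_Suc)
  qed
  show "f * 1 = f"
    by (rule series_eqI) (simp add: coeff_times if_distrib[of "(*) _"] sum.delta' cong: if_cong)
  show "(f + g) * h = f * h + g * h"
    by (rule series_eqI) (simp add: coeff_times sum.distrib distrib_right)
  show "f * (g + h) = f * g + f * h"
    by (rule series_eqI) (simp add: coeff_times sum.distrib distrib_left)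
  show "(0 :: 'a series) \<noteq> 1"
    by (metis coeff_simps(1,2) zero_neq_one)
qed (auto intro: series_eqI)

end

lemma coeff_sum: "coeff (\<Sum>i\<in>S. F i) w = (\<Sum>i\<in>S. coeff (F i) w)"
  by (induction S rule: infinite_finite_induct) auto

definition scale :: "complex \<Rightarrow> 'a series \<Rightarrow> 'a series" where
  "scale c f = Series (\<lambda>w. c * coeff f w)"

lemma coeff_scale [simp]: "coeff (scale c f) w = c * coeff f w"
  by (simp add: scale_def)

lemma scale_times_left: "scale c f * g = scale c (f * g)"
  by (rule series_eqI) (simp add: coeff_times sum_distrib_left mult.assoc)

lemma scale_times_right: "f * scale c g = scale c (f * g)"
  by (rule series_eqI) (simp add: coeff_times sum_distrib_left algebra_simps)

lemma scale_add: "scale c (f + g) = scale c f + scale c g"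
  and scale_diff: "scale c (f - g) = scale c f - scale c g"
  and scale_scale: "scale c (scale d f) = scale (c * d) f"
  and scale_minus_one: "scale (- 1) f = - f"
  and scale_one [simp]: "scale 1 f = f"
  and scale_zero [simp]: "scale c 0 = 0" "scale 0 f = 0"
  by (auto intro: series_eqI simp: algebra_simps)

definition vanishes_below :: "nat \<Rightarrow> 'a series \<Rightarrow> bool" where
  "vanishes_below m f \<longleftrightarrow> (\<forall>w. length w < m \<longrightarrow> coeff f w = 0)"

lemma vanishes_belowD: "vanishes_below m f \<Longrightarrow> length w < m \<Longrightarrow> coeff f w = 0"
  by (simp add: vanishes_below_def)

lemma vanishes_below_0 [simp]: "vanishes_below 0 f"
  and vanishes_below_zero [simp]: "vanishes_below m 0"
  by (simp_all add: vanishes_below_def)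

lemma vanishes_below_mono: "vanishes_below m f \<Longrightarrow> k \<le> m \<Longrightarrow> vanishes_below k f"
  and vanishes_below_add: "vanishes_below m f \<Longrightarrow> vanishes_below m g \<Longrightarrow> vanishes_below m (f + g)"
  and vanishes_below_diff: "vanishes_below m f \<Longrightarrow> vanishes_below m g \<Longrightarrow> vanishes_below m (f - g)"
  and vanishes_below_scale: "vanishes_below m f \<Longrightarrow> vanishes_below m (scale c f)"
  by (simp_all add: vanishes_below_def)

lemma vanishes_below_mult:
  assumes f: "vanishes_below a f" and g: "vanishes_below b g"
  shows "vanishes_below (a + b) (f * g)"
  unfolding vanishes_below_def coeff_times
proof (intro allI impI sum.neutral ballI)
  fix w :: "'a list" and i
  assume "length w < a + b" and "i \<in> {..length w}"
  then have "length (take i w) < a \<or> length (drop i w) < b" by auto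
  then show "coeff f (take i w) * coeff g (drop i w) = 0"
    using f g by (auto simp: vanishes_below_def)
qed

lemma vanishes_below_mult_le:
  "vanishes_below a f \<Longrightarrow> vanishes_below b g \<Longrightarrow> m \<le> a + b \<Longrightarrow> vanishes_below m (f * g)"
  using vanishes_below_mono vanishes_below_mult by blast

lemma vanishes_below_mult_left: "vanishes_below m f \<Longrightarrow> vanishes_below m (f * g)"
  using vanishes_below_mult[of m f 0 g] by simp

lemma vanishes_below_mult_right: "vanishes_below m g \<Longrightarrow> vanishes_below m (f * g)"
  using vanishes_below_mult[of 0 f m g] by simp

lemma vanishes_below_Suc_0_iff: "vanishes_below (Suc 0) f \<longleftrightarrow> coeff f [] = 0"
  by (auto simp: vanishes_below_def)

lemma vanishes_below_conj:
  assumes "vanishes_below 1 (P - 1)" "vanishes_below 1 (Q - 1)" "vanishes_below m f"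
  shows "vanishes_below (Suc m) (P * f * Q - f)"
proof -
  have "P * f * Q - f = (P - 1) * f * Q + f * (Q - 1)"
    by (simp add: algebra_simps)
  with assms show ?thesis
    by (metis Suc_eq_plus1 add.commute vanishes_below_add vanishes_below_mult
        vanishes_below_mult_left)
qed

definition gen :: "'a \<Rightarrow> 'a series" where
  "gen x = Series (\<lambda>w. if w = [x] then 1 else 0)"

lemma vanishes_below_gen [simp]: "vanishes_below 1 (gen x)" "vanishes_below (Suc 0) (gen x)"
  by (simp_all add: vanishes_below_def gen_def)

lemma coeff_gen_times: "coeff (gen x * f) w = (if w \<noteq> [] \<and> hd w = x then coeff f (tl w) else 0)"
proof (cases w)
  case (Cons y v)
  have "coeff (gen x * f) w = (\<Sum>i\<le>Suc (length v). if i = 1 then (if y = x then coeff f v else 0) else 0)"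
    unfolding coeff_times Cons by (rule sum.cong) (auto simp: gen_def take_Cons' split: if_splits)
  then show ?thesis by (simp add: Cons sum.delta del: sum.atMost_Suc)
qed (simp add: coeff_times gen_def)

lemma coeff_times_gen: "coeff (f * gen x) w = (if w \<noteq> [] \<and> last w = x then coeff f (butlast w) else 0)"
proof (cases w rule: rev_cases)
  case (snoc v y)
  have "coeff (f * gen x) w
      = (\<Sum>i\<le>Suc (length v). if i = length v then (if y = x then coeff f v else 0) else 0)"
    unfolding coeff_times snoc
    by (rule sum.cong) (auto simp: gen_def drop_append dest!: arg_cong[where f = length])
  then show ?thesis by (simp add: snoc)
qed (simp add: coeff_times gen_def)

definition exp_gen :: "'a \<Rightarrow> complex \<Rightarrow> 'a series" where
  "exp_gen x c = Series (\<lambda>w. if w = replicate (length w) x then c ^ length w / fact (length w) else 0)"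

lemma coeff_exp_gen_Nil [simp]: "coeff (exp_gen x c) [] = 1"
  by (simp add: exp_gen_def)

lemma take_drop_eq_replicate_iff:
  assumes "i \<le> length w"
  shows "take i w = replicate i x \<and> drop i w = replicate (length w - i) x \<longleftrightarrow>
    w = replicate (length w) x"
  by (metis append_take_drop_id assms le_add_diff_inverse replicate_add drop_replicate
      min.absorb1 take_replicate)

lemma exp_gen_add: "exp_gen x c * exp_gen x d = exp_gen x (c + d)"
proof (rule series_eqI)
  fix w :: "'a list"
  let ?n = "length w"
  show "coeff (exp_gen x c * exp_gen x d) w = coeff (exp_gen x (c + d)) w"
  proof (cases "w = replicate ?n x")
    case True
    have "coeff (exp_gen x c * exp_gen x d) w = (\<Sum>i\<le>?n. c ^ i / fact i * (d ^ (?n - i) / fact (?n - i)))"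
      unfolding coeff_times exp_gen_def using True take_drop_eq_replicate_iff[of _ w x]
      by (intro sum.cong) (auto simp: min_def)
    also have "\<dots> = (\<Sum>i\<le>?n. of_nat (?n choose i) * c ^ i * d ^ (?n - i)) / fact ?n"
      by (simp add: sum_divide_distrib binomial_fact field_simps)
    also have "\<dots> = (c + d) ^ ?n / fact ?n"
      by (simp add: binomial_ring)
    finally show ?thesis using True by (simp add: exp_gen_def)
  next
    case False
    then have "coeff (exp_gen x c * exp_gen x d) w = 0"
      unfolding coeff_times exp_gen_def using take_drop_eq_replicate_iff[of _ w x]
      by (intro sum.neutral) (auto simp: min_def)
    with False show ?thesis by (simp add: exp_gen_def)
  qed
qed

lemma exp_gen_zero [simp]: "exp_gen x 0 = 1"
  by (rule series_eqI) (auto simp: exp_gen_def)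

lemma exp_gen_inverse: "exp_gen x c * exp_gen x (- c) = 1" "exp_gen x (- c) * exp_gen x c = 1"
  by (simp_all add: exp_gen_add)

lemma vanishes_below_exp_gen_minus_one: "vanishes_below 1 (exp_gen x c - 1)"
  by (simp add: vanishes_below_Suc_0_iff)

lemma vanishes_below_exp_gen_linear: "vanishes_below 2 (exp_gen x c - 1 - scale c (gen x))"
  unfolding vanishes_below_def
proof (intro allI impI)
  fix w :: "'a list"
  assume "length w < 2"
  then have "w = [] \<or> (\<exists>y. w = [y])" by (cases w) auto
  then show "coeff (exp_gen x c - 1 - scale c (gen x)) w = 0"
    by (auto simp: exp_gen_def gen_def)
qed

lemma coeff_gen_times_exp_gen:
  "coeff (gen x * exp_gen x c) w =
    (if w \<noteq> [] \<and> w = replicate (length w) x then c ^ (length w - 1) / fact (length w - 1) else 0)"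
  by (cases w) (auto simp: coeff_gen_times exp_gen_def)

lemma coeff_exp_gen_times_gen:
  "coeff (exp_gen x c * gen x) w =
    (if w \<noteq> [] \<and> w = replicate (length w) x then c ^ (length w - 1) / fact (length w - 1) else 0)"
  by (cases w rule: rev_cases)
    (auto simp: coeff_times_gen exp_gen_def replicate_append_same[symmetric]
      simp del: replicate_append_same)

lemma gen_exp_gen_commute: "gen x * exp_gen x c = exp_gen x c * gen x"
  by (rule series_eqI) (simp only: coeff_gen_times_exp_gen coeff_exp_gen_times_gen)

definition conj_exp :: "'a \<Rightarrow> complex \<Rightarrow> 'a series \<Rightarrow> 'a series" where
  "conj_exp x c f = exp_gen x c * f * exp_gen x (- c)"

lemma conj_exp_mult: "conj_exp x c (f * g) = conj_exp x c f * conj_exp x c g"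
proof -
  have "conj_exp x c f * conj_exp x c g =
      exp_gen x c * f * (exp_gen x (- c) * exp_gen x c) * g * exp_gen x (- c)"
    by (simp add: conj_exp_def mult.assoc)
  then show ?thesis by (simp add: exp_gen_inverse conj_exp_def mult.assoc)
qed

lemma conj_exp_add: "conj_exp x c (f + g) = conj_exp x c f + conj_exp x c g"
  and conj_exp_diff: "conj_exp x c (f - g) = conj_exp x c f - conj_exp x c g"
  and conj_exp_scale: "conj_exp x c (scale d f) = scale d (conj_exp x c f)"
  and conj_exp_zero [simp]: "conj_exp x c 0 = 0"
  by (simp_all add: conj_exp_def algebra_simps scale_times_left scale_times_right)

lemma conj_exp_sum: "conj_exp x c (\<Sum>i\<in>S. F i) = (\<Sum>i\<in>S. conj_exp x c (F i))"
  by (induction S rule: infinite_finite_induct) (auto simp: conj_exp_add)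

lemma conj_exp_gen_self: "conj_exp x c (gen x) = gen x"
proof -
  have "conj_exp x c (gen x) = (exp_gen x c * exp_gen x (- c)) * gen x"
    unfolding conj_exp_def by (simp only: mult.assoc gen_exp_gen_commute)
  then show ?thesis by (simp add: exp_gen_inverse)
qed

lemma vanishes_below_conj_exp: "vanishes_below m f \<Longrightarrow> vanishes_below m (conj_exp x c f)"
  by (simp add: conj_exp_def vanishes_below_mult_left vanishes_below_mult_right)

definition exp_prod :: "('a \<times> complex) list \<Rightarrow> 'a series" where
  "exp_prod fs = foldr (\<lambda>(x, c) acc. exp_gen x c * acc) fs 1"

lemma exp_prod_simps [simp]: "exp_prod [] = 1" "exp_prod ((x, c) # fs) = exp_gen x c * exp_prod fs"
  by (simp_all add: exp_prod_def)

lemma exp_prod_append: "exp_prod (fs @ gs) = exp_prod fs * exp_prod gs"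
  by (induction fs) (auto simp: mult.assoc)

lemma coeff_exp_prod_Nil [simp]: "coeff (exp_prod fs) [] = 1"
  by (induction fs) (auto simp: coeff_times)

lemma coeff_exp_prod: "coeff (exp_prod fs) w = exp_prod_coeff fs w"
proof (induction fs arbitrary: w)
  case (Cons xc fs)
  obtain x c where xc: "xc = (x, c)" by fastforce
  have "coeff (exp_prod (xc # fs)) w = (\<Sum>i\<le>length w.
      (if take i w = replicate i x then c ^ i / fact i else 0) * exp_prod_coeff fs (drop i w))"
    unfolding xc exp_prod_simps coeff_times Cons.IH
    by (rule sum.cong) (auto simp: exp_gen_def min_def)
  also have "\<dots> = (\<Sum>i\<in>{i\<in>{..length w}. take i w = replicate i x}.
      c ^ i / fact i * exp_prod_coeff fs (drop i w))"
    by (subst sum.inter_filter) (auto intro!: sum.cong)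
  also have "\<dots> = exp_prod_coeff (xc # fs) w"
    by (simp add: xc conj_commute)
  finally show ?case .
qed simp

definition inverse_factors :: "('a \<times> complex) list \<Rightarrow> ('a \<times> complex) list" where
  "inverse_factors fs = rev (map (\<lambda>(x, c). (x, - c)) fs)"

lemma inverse_factors_simps [simp]:
  "inverse_factors [] = []" "inverse_factors ((x, c) # fs) = inverse_factors fs @ [(x, - c)]"
  by (simp_all add: inverse_factors_def)

lemma exp_prod_inverse_factors:
  "exp_prod fs * exp_prod (inverse_factors fs) = 1"
  "exp_prod (inverse_factors fs) * exp_prod fs = 1"
proof (induction fs)
  case (Cons xc fs)
  obtain x c where xc: "xc = (x, c)" by fastforce
  have "exp_prod (xc # fs) * exp_prod (inverse_factors (xc # fs)) =
      exp_gen x c * (exp_prod fs * exp_prod (inverse_factors fs)) * exp_gen x (- c)"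
    by (simp add: xc exp_prod_append mult.assoc)
  with Cons.IH show "exp_prod (xc # fs) * exp_prod (inverse_factors (xc # fs)) = 1"
    by (simp add: exp_gen_inverse)
  have "exp_prod (inverse_factors (xc # fs)) * exp_prod (xc # fs) =
      exp_prod (inverse_factors fs) * (exp_gen x (- c) * exp_gen x c) * exp_prod fs"
    by (simp add: xc exp_prod_append mult.assoc)
  with Cons.IH show "exp_prod (inverse_factors (xc # fs)) * exp_prod (xc # fs) = 1"
    by (simp add: exp_gen_inverse)
qed auto

definition count_deriv :: "('a \<Rightarrow> bool) \<Rightarrow> 'a series \<Rightarrow> 'a series" where
  "count_deriv P f = Series (\<lambda>w. of_nat (length (filter P w)) * coeff f w)"

abbreviation degree_deriv :: "'a series \<Rightarrow> 'a series" where
  "degree_deriv \<equiv> count_deriv (\<lambda>_. True)"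

lemma coeff_count_deriv [simp]: "coeff (count_deriv P f) w = of_nat (length (filter P w)) * coeff f w"
  by (simp add: count_deriv_def)

lemma count_deriv_mult: "count_deriv P (f * g) = count_deriv P f * g + f * count_deriv P g"
proof (rule series_eqI)
  fix w :: "'a list"
  have split: "length (filter P (take i w)) + length (filter P (drop i w)) = length (filter P w)" for i
    by (metis append_take_drop_id filter_append length_append)
  have "coeff (count_deriv P (f * g)) w = (\<Sum>i\<le>length w.
      (of_nat (length (filter P (take i w))) + of_nat (length (filter P (drop i w)))) *
      (coeff f (take i w) * coeff g (drop i w)))"
    by (auto simp: coeff_times sum_distrib_left split intro!: sum.cong simp flip: of_nat_add)
  also have "\<dots> = coeff (count_deriv P f * g + f * count_deriv P g) w"
    unfolding coeff_simps coeff_times coeff_count_deriv sum.distrib[symmetric]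
    by (rule sum.cong) (auto simp: algebra_simps)
  finally show "coeff (count_deriv P (f * g)) w = coeff (count_deriv P f * g + f * count_deriv P g) w" .
qed

lemma count_deriv_diff: "count_deriv P (f - g) = count_deriv P f - count_deriv P g"
  and count_deriv_one [simp]: "count_deriv P 1 = 0"
  by (auto intro: series_eqI simp: algebra_simps)

lemma vanishes_below_count_deriv: "vanishes_below m f \<Longrightarrow> vanishes_below m (count_deriv P f)"
  by (simp add: vanishes_below_def)

lemma count_deriv_exp_gen: "P x \<Longrightarrow> count_deriv P (exp_gen x c) = scale c (gen x * exp_gen x c)"
proof (rule series_eqI)
  fix w :: "'a list"
  assume "P x"
  show "coeff (count_deriv P (exp_gen x c)) w = coeff (scale c (gen x * exp_gen x c)) w"
  proof (cases "w \<noteq> [] \<and> w = replicate (length w) x")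
    case True
    then obtain n where n: "length w = Suc n" by (cases w) auto
    have "filter P w = w" using True \<open>P x\<close> by (metis filter_True in_set_replicate)
    then have "coeff (count_deriv P (exp_gen x c)) w = of_nat (Suc n) * (c ^ Suc n / fact (Suc n))"
      using True n by (simp add: exp_gen_def)
    also have "\<dots> = c * (c ^ n / fact n)"
      by (simp add: field_simps del: of_nat_Suc)
    finally show ?thesis using True n by (simp add: coeff_gen_times_exp_gen)
  next
    case False
    then have "coeff (count_deriv P (exp_gen x c)) w = 0"
      by (cases "w = []") (auto simp: exp_gen_def)
    moreover have "coeff (gen x * exp_gen x c) w = 0"
      using False by (simp only: coeff_gen_times_exp_gen if_False)
    ultimately show ?thesis by simp
  qed
qed

lemma count_deriv_gen_outside: "\<not> P x \<Longrightarrow> count_deriv P (gen x) = 0"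
  by (rule series_eqI) (auto simp: gen_def)

fun log_deriv :: "('a \<times> complex) list \<Rightarrow> 'a series" where
  "log_deriv [] = 0"
| "log_deriv ((x, c) # fs) = scale c (gen x) + conj_exp x c (log_deriv fs)"

lemma degree_deriv_exp_prod: "degree_deriv (exp_prod fs) = log_deriv fs * exp_prod fs"
proof (induction fs)
  case (Cons xc fs)
  obtain x c where xc: "xc = (x, c)" by fastforce
  have "degree_deriv (exp_prod (xc # fs)) =
      scale c (gen x * exp_gen x c) * exp_prod fs + exp_gen x c * (log_deriv fs * exp_prod fs)"
    by (simp add: xc count_deriv_mult count_deriv_exp_gen Cons.IH)
  also have "\<dots> = scale c (gen x) * (exp_gen x c * exp_prod fs) +
      exp_gen x c * log_deriv fs * (exp_gen x (- c) * exp_gen x c) * exp_prod fs"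
    by (simp add: exp_gen_inverse scale_times_left mult.assoc)
  also have "\<dots> = log_deriv (xc # fs) * exp_prod (xc # fs)"
    by (simp add: xc conj_exp_def algebra_simps)
  finally show ?case .
qed simp

lemma log_deriv_eq: "log_deriv fs = degree_deriv (exp_prod fs) * exp_prod (inverse_factors fs)"
  by (simp add: degree_deriv_exp_prod mult.assoc exp_prod_inverse_factors)

lemma log_deriv_append:
  "log_deriv (fs @ gs) = log_deriv fs + exp_prod fs * log_deriv gs * exp_prod (inverse_factors fs)"
proof (induction fs)
  case (Cons xc fs)
  obtain x c where xc: "xc = (x, c)" by fastforce
  show ?case by (simp add: xc Cons.IH conj_exp_def exp_prod_append algebra_simps)
qed simp

definition homog_part :: "nat \<Rightarrow> 'a series \<Rightarrow> 'a series" where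
  "homog_part n f = Series (\<lambda>w. if length w = n then coeff f w else 0)"

lemma coeff_homog_part [simp]: "coeff (homog_part n f) w = (if length w = n then coeff f w else 0)"
  by (simp add: homog_part_def)

definition homogeneous :: "nat \<Rightarrow> 'a series \<Rightarrow> bool" where
  "homogeneous n f \<longleftrightarrow> (\<forall>w. length w \<noteq> n \<longrightarrow> coeff f w = 0)"

lemma homog_part_add: "homog_part n (f + g) = homog_part n f + homog_part n g"
  and homog_part_diff: "homog_part n (f - g) = homog_part n f - homog_part n g"
  and homog_part_scale: "homog_part n (scale c f) = scale c (homog_part n f)"
  and homog_part_zero [simp]: "homog_part n 0 = 0"
  and homog_part_sum: "homog_part n (\<Sum>i\<in>S. F i) = (\<Sum>i\<in>S. homog_part n (F i))"
  and homog_part_count_deriv: "homog_part n (count_deriv P f) = count_deriv P (homog_part n f)"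
  by (auto intro: series_eqI simp: coeff_sum)

lemma homog_part_homogeneous: "homogeneous n f \<Longrightarrow> homog_part n f = f"
  and homog_part_homogeneous_other: "homogeneous n f \<Longrightarrow> m \<noteq> n \<Longrightarrow> homog_part m f = 0"
  and homog_part_vanishes_below: "vanishes_below m f \<Longrightarrow> n < m \<Longrightarrow> homog_part n f = 0"
  by (auto intro: series_eqI simp: homogeneous_def vanishes_below_def)

lemma vanishes_below_homogeneous: "homogeneous n f \<Longrightarrow> vanishes_below n f"
  and vanishes_below_minus_homog_part:
    "vanishes_below n f \<Longrightarrow> vanishes_below (Suc n) (f - homog_part n f)"
  by (auto simp: homogeneous_def vanishes_below_def)

lemma degree_deriv_homogeneous: "homogeneous n f \<Longrightarrow> degree_deriv f = scale (of_nat n) f"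
  by (rule series_eqI) (auto simp: homogeneous_def)

lemma homogeneous_add: "homogeneous n f \<Longrightarrow> homogeneous n g \<Longrightarrow> homogeneous n (f + g)"
  and homogeneous_diff: "homogeneous n f \<Longrightarrow> homogeneous n g \<Longrightarrow> homogeneous n (f - g)"
  and homogeneous_scale: "homogeneous n f \<Longrightarrow> homogeneous n (scale c f)"
  and homogeneous_gen: "homogeneous (Suc 0) (gen x)"
  and homogeneous_zero [simp]: "homogeneous n 0"
  by (auto simp: homogeneous_def gen_def)

lemma homogeneous_mult:
  assumes f: "homogeneous a f" and g: "homogeneous b g"
  shows "homogeneous (a + b) (f * g)"
  unfolding homogeneous_def coeff_times
proof (intro allI impI sum.neutral ballI)
  fix w :: "'a list" and i
  assume "length w \<noteq> a + b" and "i \<in> {..length w}"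
  then have "length (take i w) \<noteq> a \<or> length (drop i w) \<noteq> b" by auto
  then show "coeff f (take i w) * coeff g (drop i w) = 0"
    using f g by (auto simp: homogeneous_def)
qed

lemma homog_part_mult: "homog_part n (f * g) = (\<Sum>k\<le>n. homog_part k f * homog_part (n - k) g)"
proof (rule series_eqI)
  fix w :: "'a list"
  show "coeff (homog_part n (f * g)) w = coeff (\<Sum>k\<le>n. homog_part k f * homog_part (n - k) g) w"
  proof (cases "length w = n")
    case True
    then have "coeff (\<Sum>k\<le>n. homog_part k f * homog_part (n - k) g) w
        = (\<Sum>k\<le>n. \<Sum>i\<le>n. if i = k then coeff f (take i w) * coeff g (drop i w) else 0)"
      unfolding coeff_sum coeff_times by (intro sum.cong) (auto simp: min_def)
    also have "\<dots> = (\<Sum>i\<le>n. coeff f (take i w) * coeff g (drop i w))"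
      by (subst sum.swap) simp
    finally show ?thesis using True by (simp add: coeff_times)
  next
    case False
    then show ?thesis
      unfolding coeff_sum coeff_times by (auto intro!: sum.neutral)
  qed
qed

definition commutator :: "'a series \<Rightarrow> 'a series \<Rightarrow> 'a series" where
  "commutator f g = f * g - g * f"

lemma commutator_add_left: "commutator (f + g) h = commutator f h + commutator g h"
  and commutator_add_right: "commutator h (f + g) = commutator h f + commutator h g"
  and commutator_scale_left: "commutator (scale c f) g = scale c (commutator f g)"
  and commutator_scale_right: "commutator f (scale c g) = scale c (commutator f g)"
  and commutator_zero [simp]: "commutator 0 f = 0" "commutator f 0 = 0"
  and conj_exp_commutator: "conj_exp x d (commutator f g) = commutator (conj_exp x d f) (conj_exp x d g)"
  by (simp_all add: commutator_def algebra_simps scale_times_left scale_times_right scale_diff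
      conj_exp_diff conj_exp_mult)

lemma homogeneous_commutator:
  "homogeneous a f \<Longrightarrow> homogeneous b g \<Longrightarrow> homogeneous (a + b) (commutator f g)"
  unfolding commutator_def by (metis add.commute homogeneous_diff homogeneous_mult)

lemma vanishes_below_commutator:
  "vanishes_below a f \<Longrightarrow> vanishes_below b g \<Longrightarrow> vanishes_below (a + b) (commutator f g)"
  unfolding commutator_def
  by (metis add.commute vanishes_below_diff vanishes_below_mult)

lemma homog_part_commutator_gen:
  "homog_part (Suc n) (commutator (gen x) f) = commutator (gen x) (homog_part n f)"
proof -
  have "homog_part (Suc n) (gen x * f) = gen x * homog_part n f"
    and "homog_part (Suc n) (f * gen x) = homog_part n f * gen x"
    by (auto intro!: series_eqI simp: coeff_gen_times coeff_times_gen)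
  then show ?thesis by (simp add: commutator_def homog_part_diff)
qed

fun right_normed :: "'a list \<Rightarrow> 'a series" where
  "right_normed [] = 0"
| "right_normed (x # v) = (if v = [] then gen x else commutator (gen x) (right_normed v))"

lemma homogeneous_right_normed: "homogeneous (length v) (right_normed v)"
  by (induction v) (auto simp: homogeneous_gen homogeneous_commutator[of 1, simplified])

text \<open>Right-normed brackets of words span the degree-n part of the free Lie algebra.\<close>

inductive lie_poly :: "nat \<Rightarrow> 'a series \<Rightarrow> bool" where
  lie_poly_zero: "lie_poly n 0"
| lie_poly_right_normed: "length v = n \<Longrightarrow> lie_poly n (scale c (right_normed v))"
| lie_poly_add: "lie_poly n f \<Longrightarrow> lie_poly n g \<Longrightarrow> lie_poly n (f + g)"

lemma lie_poly_homogeneous: "lie_poly n f \<Longrightarrow> homogeneous n f"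
  by (induction rule: lie_poly.induct)
    (auto intro!: homogeneous_add homogeneous_scale homogeneous_right_normed)

lemma lie_poly_scale: "lie_poly n f \<Longrightarrow> lie_poly n (scale c f)"
  by (induction rule: lie_poly.induct) (auto simp: scale_scale scale_add intro: lie_poly.intros)

lemma lie_poly_diff: "lie_poly n f \<Longrightarrow> lie_poly n g \<Longrightarrow> lie_poly n (f - g)"
  by (metis lie_poly_add lie_poly_scale scale_minus_one diff_conv_add_uminus)

lemma lie_poly_sum: "(\<And>i. i \<in> S \<Longrightarrow> lie_poly n (F i)) \<Longrightarrow> lie_poly n (\<Sum>i\<in>S. F i)"
  by (induction S rule: infinite_finite_induct) (auto intro: lie_poly.intros)

lemma lie_poly_right_normed_word: "lie_poly (length v) (right_normed v)"
  using lie_poly_right_normed[where c = 1] by simp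

lemma lie_poly_gen: "lie_poly (Suc 0) (gen x)"
  using lie_poly_right_normed_word[of "[x]"] by simp

lemma lie_poly_commutator_gen: "lie_poly n f \<Longrightarrow> lie_poly (Suc n) (commutator (gen x) f)"
proof (induction rule: lie_poly.induct)
  case (lie_poly_right_normed v n c)
  then show ?case
    using lie_poly.lie_poly_right_normed[of "x # v" "Suc n" c]
    by (cases "v = []") (auto simp: commutator_scale_right intro: lie_poly_zero)
qed (auto simp: commutator_add_right intro: lie_poly.intros)

lemma lie_poly_commutator_right_normed:
  "lie_poly (length u + length v) (commutator (right_normed u) (right_normed v))"
proof (induction v arbitrary: u)
  case (Cons x v)
  consider "u = []" | "u \<noteq> []" "v = []" | "u \<noteq> []" "v \<noteq> []" by blast
  then show ?case
  proof cases
    case 2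
    then have "commutator (right_normed u) (right_normed (x # v)) =
        scale (- 1) (commutator (gen x) (right_normed u))"
      by (simp add: commutator_def scale_minus_one)
    then show ?thesis
      using 2 lie_poly_scale[OF lie_poly_commutator_gen[OF lie_poly_right_normed_word]] by simp
  next
    case 3
    \<comment> \<open>Jacobi identity\<close>
    then have "commutator (right_normed u) (right_normed (x # v)) =
        commutator (gen x) (commutator (right_normed u) (right_normed v)) -
        commutator (right_normed (x # u)) (right_normed v)"
      by (simp add: commutator_def algebra_simps)
    moreover have "lie_poly (length (x # u) + length v)
        (commutator (gen x) (commutator (right_normed u) (right_normed v)) -
          commutator (right_normed (x # u)) (right_normed v))"
      using lie_poly_commutator_gen[OF Cons.IH[of u]] Cons.IH[of "x # u"]
      by (intro lie_poly_diff) simp_all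
    ultimately show ?thesis by simp
  qed (simp add: lie_poly_zero)
qed (simp add: lie_poly_zero)

lemma lie_poly_commutator: "lie_poly a f \<Longrightarrow> lie_poly b g \<Longrightarrow> lie_poly (a + b) (commutator f g)"
proof (induction arbitrary: g rule: lie_poly.induct)
  case (lie_poly_right_normed u a c)
  from lie_poly_right_normed.prems lie_poly_right_normed.hyps show ?case
    by (induction rule: lie_poly.induct)
      (auto simp: commutator_add_right commutator_scale_left commutator_scale_right
        intro!: lie_poly_scale lie_poly_commutator_right_normed intro: lie_poly.intros)
qed (auto simp: commutator_add_left intro: lie_poly.intros)

definition lie_series :: "'a series \<Rightarrow> bool" where
  "lie_series f \<longleftrightarrow> (\<forall>n. lie_poly n (homog_part n f))"

lemma lie_series_add: "lie_series f \<Longrightarrow> lie_series g \<Longrightarrow> lie_series (f + g)"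
  and lie_series_scale: "lie_series f \<Longrightarrow> lie_series (scale c f)"
  and lie_series_zero [simp]: "lie_series 0"
  and lie_series_sum: "(\<And>i. i \<in> S \<Longrightarrow> lie_series (F i)) \<Longrightarrow> lie_series (\<Sum>i\<in>S. F i)"
  by (simp_all add: lie_series_def homog_part_add homog_part_scale homog_part_sum lie_poly_add
      lie_poly_scale lie_poly_sum lie_poly_zero)

lemma lie_series_lie_poly: "lie_poly k f \<Longrightarrow> lie_series f"
  unfolding lie_series_def
  by (metis homog_part_homogeneous homog_part_homogeneous_other lie_poly_homogeneous lie_poly_zero)

lemma lie_series_commutator:
  assumes f: "lie_series f" and g: "lie_series g"
  shows "lie_series (commutator f g)"
  unfolding lie_series_def
proof
  fix n
  have "homog_part n (g * f) = (\<Sum>k\<le>n. homog_part (n - k) g * homog_part k f)"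
    unfolding homog_part_mult
    by (rule sum.reindex_bij_witness[where i = "\<lambda>k. n - k" and j = "\<lambda>k. n - k"]) auto
  then have "homog_part n (commutator f g) =
      (\<Sum>k\<le>n. commutator (homog_part k f) (homog_part (n - k) g))"
    by (simp add: commutator_def homog_part_diff homog_part_mult sum_subtractf)
  moreover have "lie_poly n (commutator (homog_part k f) (homog_part (n - k) g))" if "k \<le> n" for k
    using lie_poly_commutator[of k "homog_part k f" "n - k" "homog_part (n - k) g"] f g that
    by (simp add: lie_series_def)
  ultimately show "lie_poly n (homog_part n (commutator f g))"
    by (auto intro: lie_poly_sum)
qed

definition outside_degree :: "('a \<Rightarrow> bool) \<Rightarrow> nat \<Rightarrow> 'a series \<Rightarrow> bool" where
  "outside_degree P k f \<longleftrightarrow> (\<forall>w. coeff f w \<noteq> 0 \<longrightarrow> length (filter (\<lambda>y. \<not> P y) w) = k)"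

lemma outside_degree_mult:
  assumes f: "outside_degree P a f" and g: "outside_degree P b g"
  shows "outside_degree P (a + b) (f * g)"
  unfolding outside_degree_def
proof (intro allI impI)
  fix w :: "'a list"
  let ?out = "\<lambda>v. length (filter (\<lambda>y. \<not> P y) v)"
  assume "coeff (f * g) w \<noteq> 0"
  then obtain i where "coeff f (take i w) * coeff g (drop i w) \<noteq> 0"
    unfolding coeff_times using sum.not_neutral_contains_not_neutral by blast
  with f g have "?out (take i w) = a" "?out (drop i w) = b"
    by (simp_all add: outside_degree_def)
  moreover have "?out w = ?out (take i w) + ?out (drop i w)"
    by (metis append_take_drop_id filter_append length_append)
  ultimately show "?out w = a + b" by simp
qed

lemma outside_degree_exp_gen:
  assumes "P x"
  shows "outside_degree P 0 (exp_gen x c)"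
  unfolding outside_degree_def
proof (intro allI impI)
  fix w :: "'a list"
  assume "coeff (exp_gen x c) w \<noteq> 0"
  then have "w = replicate (length w) x"
    by (auto simp: exp_gen_def split: if_splits)
  then have "\<forall>y\<in>set w. P y"
    using assms by (metis in_set_replicate)
  then show "length (filter (\<lambda>y. \<not> P y) w) = 0"
    by (simp add: filter_empty_conv)
qed

lemma outside_degree_gen: "\<not> P x \<Longrightarrow> outside_degree P 1 (gen x)"
  by (auto simp: outside_degree_def gen_def)

lemma count_deriv_homog_part_outside_degree:
  assumes "outside_degree P k f"
  shows "count_deriv P (homog_part n f) = scale (of_nat (n - k)) (homog_part n f)"
proof (rule series_eqI)
  fix w :: "'a list"
  have "length (filter P w) = length w - k" if "coeff f w \<noteq> 0"
    using assms that sum_length_filter_compl[of P w] by (auto simp: outside_degree_def)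
  then show "coeff (count_deriv P (homog_part n f)) w = coeff (scale (of_nat (n - k)) (homog_part n f)) w"
    by auto
qed

lemma count_deriv_conj_exp_gen:
  assumes "x \<noteq> y"
  shows "count_deriv ((=) y) (conj_exp y d (gen x)) =
    scale d (commutator (gen y) (conj_exp y d (gen x)))"
proof -
  let ?E = "exp_gen y d" and ?E' = "exp_gen y (- d)"
  have "count_deriv ((=) y) (conj_exp y d (gen x)) =
      scale d (gen y * ?E) * gen x * ?E' + ?E * gen x * scale (- d) (gen y * ?E')"
    using assms by (simp add: conj_exp_def count_deriv_mult count_deriv_exp_gen count_deriv_gen_outside)
  also have "\<dots> = scale d (gen y * (?E * gen x * ?E')) - scale d (?E * gen x * ?E' * gen y)"
  proof -
    have "scale d (gen y * ?E) * gen x * ?E' = scale d (gen y * (?E * gen x * ?E'))"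
      by (simp add: scale_times_left mult.assoc)
    moreover have "?E * gen x * scale (- d) (gen y * ?E') = - scale d (?E * gen x * ?E' * gen y)"
      unfolding gen_exp_gen_commute scale_times_right by (rule series_eqI) (simp add: mult.assoc)
    ultimately show ?thesis by simp
  qed
  finally show ?thesis by (simp add: commutator_def scale_diff conj_exp_def)
qed

text \<open>Every word of e^(dy) x e^(-dy) has exactly one letter other than y, so counting the y's in its
  homogeneous part of degree j + 2 multiplies that part by j + 1.\<close>

lemma homog_part_conj_exp_gen_Suc:
  assumes "x \<noteq> y"
  shows "homog_part (Suc (Suc j)) (conj_exp y d (gen x)) =
    scale (d / of_nat (Suc j)) (commutator (gen y) (homog_part (Suc j) (conj_exp y d (gen x))))"
proof -
  let ?W = "conj_exp y d (gen x)"
  have "outside_degree ((=) y) (0 + 1 + 0) (exp_gen y d * gen x * exp_gen y (- d))"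
    using assms by (intro outside_degree_mult outside_degree_exp_gen outside_degree_gen) auto
  then have "outside_degree ((=) y) 1 ?W"
    by (simp add: conj_exp_def)
  then have "scale (of_nat (Suc j)) (homog_part (Suc (Suc j)) ?W) =
      homog_part (Suc (Suc j)) (count_deriv ((=) y) ?W)"
    by (simp add: homog_part_count_deriv count_deriv_homog_part_outside_degree)
  also have "\<dots> = scale d (commutator (gen y) (homog_part (Suc j) ?W))"
    using assms by (simp add: count_deriv_conj_exp_gen homog_part_scale homog_part_commutator_gen)
  finally have "scale (1 / of_nat (Suc j)) (scale (of_nat (Suc j)) (homog_part (Suc (Suc j)) ?W)) =
      scale (1 / of_nat (Suc j)) (scale d (commutator (gen y) (homog_part (Suc j) ?W)))"
    by simp
  then show ?thesis by (simp add: scale_scale del: of_nat_Suc)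
qed

lemma lie_series_conj_exp_gen: "lie_series (conj_exp y d (gen x))"
proof (cases "x = y")
  case True
  then show ?thesis by (simp add: conj_exp_gen_self lie_series_lie_poly[OF lie_poly_gen])
next
  case False
  let ?W = "conj_exp y d (gen x)"
  have W1: "vanishes_below (Suc (Suc 0)) (?W - gen x)"
    unfolding conj_exp_def
    by (intro vanishes_below_conj vanishes_below_exp_gen_minus_one) simp
  have "lie_poly n (homog_part n ?W)" for n
  proof (induction n rule: nat_less_induct)
    case (1 n)
    consider "n = 0" | "n = Suc 0" | j where "n = Suc (Suc j)"
      by (metis not0_implies_Suc)
    then show ?case
    proof cases
      case 1
      have "vanishes_below (Suc 0) ?W"
        by (simp add: conj_exp_def vanishes_below_mult_left vanishes_below_mult_right)
      then show ?thesis using 1 by (simp add: homog_part_vanishes_below lie_poly_zero)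
    next
      case 2
      have "homog_part (Suc 0) ?W = gen x"
        using homog_part_vanishes_below[OF W1, of "Suc 0"] homogeneous_gen[of x]
        by (simp add: homog_part_diff homog_part_homogeneous)
      then show ?thesis using 2 by (simp add: lie_poly_gen)
    next
      case 3
      then show ?thesis
        using "1.IH" False
        by (simp add: homog_part_conj_exp_gen_Suc lie_poly_scale lie_poly_commutator_gen)
    qed
  qed
  then show ?thesis by (simp add: lie_series_def)
qed

lemma lie_series_conj_exp_right_normed: "lie_series (conj_exp y d (right_normed v))"
proof (induction v)
  case (Cons x v)
  have "right_normed (x # v) = gen x \<or>
      right_normed (x # v) = commutator (right_normed [x]) (right_normed v)"
    by simp
  then show ?case
    using Cons.IH lie_series_conj_exp_gen[of y d x]
    by (auto simp: conj_exp_commutator intro: lie_series_commutator)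
qed simp

lemma lie_series_conj_exp_lie_poly: "lie_poly n f \<Longrightarrow> lie_series (conj_exp y d f)"
  by (induction rule: lie_poly.induct)
    (simp_all add: conj_exp_scale conj_exp_add lie_series_scale lie_series_add
      lie_series_conj_exp_right_normed)

lemma lie_series_conj_exp:
  assumes "lie_series f"
  shows "lie_series (conj_exp y d f)"
  unfolding lie_series_def
proof
  fix n
  let ?f = "\<Sum>k\<le>n. homog_part k f"
  have "vanishes_below (Suc n) (f - ?f)"
    by (auto simp: vanishes_below_def coeff_sum)
  then have "homog_part n (conj_exp y d (f - ?f)) = 0"
    by (intro homog_part_vanishes_below[of "Suc n"] vanishes_below_conj_exp) auto
  then have "homog_part n (conj_exp y d f) = homog_part n (conj_exp y d ?f)"
    by (simp add: conj_exp_diff homog_part_diff)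
  moreover have "lie_series (conj_exp y d ?f)"
    using assms unfolding conj_exp_sum
    by (intro lie_series_sum lie_series_conj_exp_lie_poly) (auto simp: lie_series_def)
  ultimately show "lie_poly n (homog_part n (conj_exp y d f))"
    by (simp add: lie_series_def)
qed

lemma lie_series_log_deriv: "lie_series (log_deriv fs)"
proof (induction fs)
  case (Cons xc fs)
  obtain x c where "xc = (x, c)" by fastforce
  with Cons.IH show ?case
    by (simp add: lie_series_add lie_series_scale lie_series_conj_exp
        lie_series_lie_poly[OF lie_poly_gen])
qed simp

definition A_coeffs_in :: "complex set \<Rightarrow> (letter \<times> complex) list \<Rightarrow> bool" where
  "A_coeffs_in S fs \<longleftrightarrow> (\<forall>(x, c) \<in> set fs. x = LA \<longrightarrow> c \<in> S)"

lemma A_coeffs_in_simps [simp]: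
  "A_coeffs_in S []"
  "A_coeffs_in S ((x, c) # fs) \<longleftrightarrow> (x = LA \<longrightarrow> c \<in> S) \<and> A_coeffs_in S fs"
  "A_coeffs_in S (fs @ gs) \<longleftrightarrow> A_coeffs_in S fs \<and> A_coeffs_in S gs"
  by (auto simp: A_coeffs_in_def)

lemma A_coeffs_in_mono: "A_coeffs_in S fs \<Longrightarrow> S \<subseteq> T \<Longrightarrow> A_coeffs_in T fs"
  by (auto simp: A_coeffs_in_def)

lemma A_coeffs_in_inverse_factors:
  "A_coeffs_in S fs \<Longrightarrow> (\<And>c. c \<in> S \<Longrightarrow> - c \<in> S) \<Longrightarrow> A_coeffs_in S (inverse_factors fs)"
  by (auto simp: A_coeffs_in_def inverse_factors_def)

text \<open>Purely imaginary A-coefficients are what make group commutators admissible: both d and -d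
  must have nonnegative real part.\<close>

definition realizable :: "nat \<Rightarrow> letter series \<Rightarrow> bool" where
  "realizable k q \<longleftrightarrow> vanishes_below k q \<and>
    (\<exists>gs. A_coeffs_in {c. Re c = 0} gs \<and> vanishes_below (Suc k) (exp_prod gs - 1 - q))"

lemma realizable_zero: "realizable k 0"
  unfolding realizable_def by (auto intro!: exI[of _ "[]"])

lemma realizable_approx:
  assumes "realizable k q"
  obtains gs where "A_coeffs_in {c. Re c = 0} gs" "vanishes_below k q"
    "vanishes_below (Suc k) (exp_prod gs - 1 - q)" "vanishes_below k (exp_prod gs - 1)"
proof -
  obtain gs where gs: "A_coeffs_in {c. Re c = 0} gs" "vanishes_below k q"
    "vanishes_below (Suc k) (exp_prod gs - 1 - q)"
    using assms by (auto simp: realizable_def)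
  moreover have "exp_prod gs - 1 = (exp_prod gs - 1 - q) + q" by simp
  ultimately show ?thesis
    by (metis that le_SucI order_refl vanishes_below_add vanishes_below_mono)
qed

lemma realizable_add:
  assumes "1 \<le> k" "realizable k q" "realizable k r"
  shows "realizable k (q + r)"
proof -
  obtain gs where gs: "A_coeffs_in {c. Re c = 0} gs" "vanishes_below k q"
    "vanishes_below (Suc k) (exp_prod gs - 1 - q)" "vanishes_below k (exp_prod gs - 1)"
    using assms(2) by (rule realizable_approx)
  obtain hs where hs: "A_coeffs_in {c. Re c = 0} hs" "vanishes_below k r"
    "vanishes_below (Suc k) (exp_prod hs - 1 - r)" "vanishes_below k (exp_prod hs - 1)"
    using assms(3) by (rule realizable_approx)
  have eq: "exp_prod (gs @ hs) - 1 - (q + r) =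
      (exp_prod gs - 1 - q) + (exp_prod hs - 1 - r) + (exp_prod gs - 1) * (exp_prod hs - 1)"
    by (simp add: exp_prod_append algebra_simps)
  have "vanishes_below (Suc k) ((exp_prod gs - 1) * (exp_prod hs - 1))"
    using assms(1) gs(4) hs(4) by (intro vanishes_below_mult_le) auto
  then have "vanishes_below (Suc k) (exp_prod (gs @ hs) - 1 - (q + r))"
    unfolding eq using gs(3) hs(3) by (intro vanishes_below_add)
  then show ?thesis
    using gs(1,2) hs(1,2) unfolding realizable_def
    by (intro conjI vanishes_below_add exI[of _ "gs @ hs"]) simp_all
qed

lemma realizable_scale_gen: "(x = LA \<longrightarrow> Re c = 0) \<Longrightarrow> realizable 1 (scale c (gen x))"
  unfolding realizable_def using vanishes_below_exp_gen_linear[of x c]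
  by (intro conjI vanishes_below_scale exI[of _ "[(x, c)]"]) (simp_all add: numeral_2_eq_2)

lemma vanishes_below_commutator_approx:
  assumes e: "vanishes_below 1 e" and E: "vanishes_below 2 (E - 1 - e)"
    and q: "vanishes_below k q" and Q: "vanishes_below (Suc k) (Q - 1 - q)"
  shows "vanishes_below (Suc (Suc k)) (commutator E Q - commutator e q)"
proof -
  have Q1: "vanishes_below k (Q - 1)"
    using vanishes_below_add[OF q vanishes_below_mono[OF Q]] by simp
  have "commutator E Q - commutator e q =
      commutator e (Q - 1 - q) + commutator (E - 1 - e) (Q - 1)"
    by (simp add: commutator_def algebra_simps)
  moreover have "vanishes_below (1 + Suc k) (commutator e (Q - 1 - q))"
    using e Q by (rule vanishes_below_commutator)
  moreover have "vanishes_below (2 + k) (commutator (E - 1 - e) (Q - 1))"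
    using E Q1 by (rule vanishes_below_commutator)
  ultimately show ?thesis by (simp add: vanishes_below_add)
qed

lemma realizable_commutator:
  assumes k: "1 \<le> k" and q: "realizable k q" and d: "x = LA \<longrightarrow> Re d = 0"
  shows "realizable (Suc k) (scale d (commutator (gen x) q))"
proof -
  obtain gs where gs: "A_coeffs_in {c. Re c = 0} gs" "vanishes_below k q"
    "vanishes_below (Suc k) (exp_prod gs - 1 - q)" "vanishes_below k (exp_prod gs - 1)"
    using q by (rule realizable_approx)
  let ?E = "exp_gen x d" and ?Q = "exp_prod gs"
  let ?E' = "exp_gen x (- d)" and ?Q' = "exp_prod (inverse_factors gs)"
  let ?T = "scale d (commutator (gen x) q)"
  have T: "vanishes_below (Suc k) ?T"
    using vanishes_below_commutator[OF vanishes_below_gen(1) gs(2)] by (simp add: vanishes_below_scale)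
  have "vanishes_below (Suc (Suc k)) (commutator ?E ?Q - commutator (scale d (gen x)) q)"
    by (rule vanishes_below_commutator_approx[OF vanishes_below_scale[OF vanishes_below_gen(1)]
          vanishes_below_exp_gen_linear gs(2,3)])
  then have K: "vanishes_below (Suc (Suc k)) (commutator ?E ?Q - ?T)"
    by (simp add: commutator_scale_left)
  then have K': "vanishes_below (Suc k) (commutator ?E ?Q)"
    using vanishes_below_add[OF vanishes_below_mono[OF K] T] by simp
  let ?gs = "[(x, d)] @ gs @ [(x, - d)] @ inverse_factors gs"
  have "commutator ?E ?Q * (?E' * ?Q') = ?E * ?Q * ?E' * ?Q' - ?Q * (?E * ?E') * ?Q'"
    by (simp add: commutator_def algebra_simps)
  then have group_commutator: "exp_prod ?gs - 1 = commutator ?E ?Q * (?E' * ?Q')"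
    by (simp add: exp_gen_inverse exp_prod_inverse_factors exp_prod_append mult.assoc)
  have eq: "exp_prod ?gs - 1 - ?T = commutator ?E ?Q * (?E' * ?Q' - 1) + (commutator ?E ?Q - ?T)"
    unfolding diff_diff_eq[symmetric] group_commutator by (simp add: algebra_simps)
  have "vanishes_below 1 (?E' * ?Q' - 1)"
    by (simp add: vanishes_below_Suc_0_iff coeff_times)
  then have "vanishes_below (Suc (Suc k)) (commutator ?E ?Q * (?E' * ?Q' - 1))"
    using vanishes_below_mult[OF K', of 1] by simp
  then have "vanishes_below (Suc (Suc k)) (exp_prod ?gs - 1 - ?T)"
    unfolding eq using K by (rule vanishes_below_add)
  moreover have "A_coeffs_in {c. Re c = 0} ?gs"
    using gs(1) d by (auto intro: A_coeffs_in_inverse_factors)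
  ultimately show ?thesis
    using T unfolding realizable_def by blast
qed

lemma realizable_scale_commutator_gen:
  assumes k: "1 \<le> k" and q: "\<And>c. realizable k (scale c q)"
  shows "realizable (Suc k) (scale c (commutator (gen x) q))"
proof -
  \<comment> \<open>The outer coefficient u is admissible; the rest of c is absorbed by q.\<close>
  define u where "u = (if x = LA then \<i> else 1)"
  have "u \<noteq> 0" and u: "x = LA \<longrightarrow> Re u = 0"
    by (auto simp: u_def)
  then have "scale c (commutator (gen x) q) = scale u (commutator (gen x) (scale (c / u) q))"
    by (simp add: commutator_scale_right scale_scale)
  with realizable_commutator[OF _ q u] k show ?thesis
    by simp
qed

lemma realizable_commutator_gen_LB: "realizable 2 (scale c (commutator (gen x) (gen LB)))"
  using realizable_scale_commutator_gen[of 1 "gen LB"] realizable_scale_gen[of LB]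
  by (simp add: numeral_2_eq_2)

lemma realizable_right_normed:
  "2 \<le> length v \<Longrightarrow> realizable (length v) (scale c (right_normed v))"
proof (induction v arbitrary: c)
  case (Cons x w)
  show ?case
  proof (cases "2 \<le> length w")
    case True
    then have "w \<noteq> []" by auto
    with Cons.IH[OF True] True show ?thesis
      by (simp add: realizable_scale_commutator_gen)
  next
    case False
    with Cons.prems have "length w = Suc 0" by simp
    then obtain y where w: "w = [y]"
      by (metis length_0_conv length_Suc_conv)
    \<comment> \<open>The inner letter should be B, whose coefficient is unrestricted; [B, A] = -[A, B].\<close>
    consider "y = LB" | "y = LA" "x = LA" | "y = LA" "x = LB"
      by (metis letter.exhaust)
    then show ?thesis
    proof cases
      case 1
      then show ?thesis using w realizable_commutator_gen_LB by (simp add: numeral_2_eq_2)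
    next
      case 2
      then show ?thesis using w by (simp add: commutator_def realizable_zero)
    next
      case 3
      then have "scale c (right_normed (x # w)) = scale (- c) (commutator (gen LA) (gen LB))"
        using w by (auto intro: series_eqI simp: commutator_def algebra_simps)
      then show ?thesis using w realizable_commutator_gen_LB by (simp add: numeral_2_eq_2)
    qed
  qed
qed simp

lemma realizable_lie_poly: "lie_poly n q \<Longrightarrow> 2 \<le> n \<Longrightarrow> realizable n q"
  by (induction rule: lie_poly.induct)
    (auto simp: realizable_zero realizable_add realizable_right_normed)

definition A_plus_B :: "letter series" where
  "A_plus_B = gen LA + gen LB"

lemma log_deriv_approx:
  assumes q: "homogeneous n q" and gs: "vanishes_below (Suc n) (exp_prod gs - 1 - q)"
  shows "vanishes_below (Suc n) (log_deriv gs - scale (of_nat n) q)"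
proof -
  let ?P' = "exp_prod (inverse_factors gs)"
  have "degree_deriv (exp_prod gs) = degree_deriv (exp_prod gs - 1 - q) + scale (of_nat n) q"
    using degree_deriv_homogeneous[OF q] by (simp add: count_deriv_diff)
  then have eq: "log_deriv gs - scale (of_nat n) q =
      degree_deriv (exp_prod gs - 1 - q) * ?P' + scale (of_nat n) q * (?P' - 1)"
    by (simp add: log_deriv_eq algebra_simps)
  have "vanishes_below (n + 1) (scale (of_nat n) q * (?P' - 1))"
    by (rule vanishes_below_mult[OF vanishes_below_scale[OF vanishes_below_homogeneous[OF q]]])
      (simp add: vanishes_below_Suc_0_iff)
  then show ?thesis
    unfolding eq
    by (intro vanishes_below_add vanishes_below_mult_left[OF vanishes_below_count_deriv[OF gs]]) simp
qed

text \<open>Appending a product whose L is -Z to leading order cancels the degree-(p+1) error; conjugation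
  by exp_prod fs only changes that contribution in higher degrees.\<close>

lemma log_deriv_step:
  assumes p: "1 \<le> p" and fs: "vanishes_below (Suc p) (log_deriv fs - A_plus_B)"
  obtains gs where "A_coeffs_in {c. Re c = 0} gs"
    "vanishes_below (Suc (Suc p)) (log_deriv (fs @ gs) - A_plus_B)"
proof -
  let ?D = "log_deriv fs - A_plus_B"
  define Z where "Z = homog_part (Suc p) (log_deriv fs)"
  have Z: "lie_poly (Suc p) Z"
    using lie_series_log_deriv[of fs] by (simp add: lie_series_def Z_def)
  have "homogeneous (Suc 0) A_plus_B"
    by (simp add: A_plus_B_def homogeneous_add homogeneous_gen)
  then have "homog_part (Suc p) A_plus_B = 0"
    using p by (simp add: homog_part_homogeneous_other)
  then have DZ: "vanishes_below (Suc (Suc p)) (?D - Z)"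
    using vanishes_below_minus_homog_part[OF fs] by (simp add: Z_def homog_part_diff)
  let ?q = "scale (- 1 / of_nat (Suc p)) Z"
  have "realizable (Suc p) ?q"
    using p by (intro realizable_lie_poly lie_poly_scale Z) simp
  then obtain gs where gs: "A_coeffs_in {c. Re c = 0} gs"
    "vanishes_below (Suc (Suc p)) (exp_prod gs - 1 - ?q)"
    by (auto simp: realizable_def)
  have "vanishes_below (Suc (Suc p)) (log_deriv gs - scale (of_nat (Suc p)) ?q)"
    using Z gs(2) by (intro log_deriv_approx homogeneous_scale lie_poly_homogeneous)
  then have LZ: "vanishes_below (Suc (Suc p)) (log_deriv gs + Z)"
    by (simp add: scale_scale scale_minus_one del: of_nat_Suc)
  have "vanishes_below (Suc p) (log_deriv gs)"
    using vanishes_below_diff[OF vanishes_below_mono[OF LZ]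
        vanishes_below_homogeneous[OF lie_poly_homogeneous[OF Z]]]
    by simp
  then have conj: "vanishes_below (Suc (Suc p))
      (exp_prod fs * log_deriv gs * exp_prod (inverse_factors fs) - log_deriv gs)"
    by (intro vanishes_below_conj) (simp_all add: vanishes_below_Suc_0_iff)
  have eq: "log_deriv (fs @ gs) - A_plus_B = (?D - Z) + (log_deriv gs + Z) +
      (exp_prod fs * log_deriv gs * exp_prod (inverse_factors fs) - log_deriv gs)"
    by (simp add: log_deriv_append algebra_simps)
  have "vanishes_below (Suc (Suc p)) (log_deriv (fs @ gs) - A_plus_B)"
    unfolding eq by (intro vanishes_below_add DZ LZ conj)
  with gs(1) show ?thesis by (rule that)
qed

lemma exists_log_deriv_approx:
  "\<exists>fs. A_coeffs_in {c. 0 \<le> Re c} fs \<and> vanishes_below (Suc p) (log_deriv fs - A_plus_B)"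
proof (induction p)
  case 0
  have "vanishes_below 1 (log_deriv [] - A_plus_B)"
    by (simp add: vanishes_below_Suc_0_iff A_plus_B_def gen_def)
  then show ?case by (intro exI[of _ "[]"]) simp
next
  case (Suc p)
  show ?case
  proof (cases "p = 0")
    case True
    have eq: "log_deriv [(LA, 1), (LB, 1)] - A_plus_B = conj_exp LA 1 (gen LB) - gen LB"
      by (simp add: A_plus_B_def)
    have "vanishes_below (Suc (Suc 0)) (conj_exp LA 1 (gen LB) - gen LB)"
      unfolding conj_exp_def by (intro vanishes_below_conj vanishes_below_exp_gen_minus_one) simp
    then have "vanishes_below (Suc (Suc p)) (log_deriv [(LA, 1), (LB, 1)] - A_plus_B)"
      unfolding eq using True by simp
    then show ?thesis
      by (intro exI[of _ "[(LA, 1), (LB, 1)]"]) simp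
  next
    case False
    with Suc.IH obtain fs where fs: "A_coeffs_in {c. 0 \<le> Re c} fs"
      "vanishes_below (Suc p) (log_deriv fs - A_plus_B)"
      by auto
    from False have "1 \<le> p" by simp
    then obtain gs where "A_coeffs_in {c. Re c = 0} gs"
      "vanishes_below (Suc (Suc p)) (log_deriv (fs @ gs) - A_plus_B)"
      by (rule log_deriv_step[OF _ fs(2)])
    with fs(1) show ?thesis
      by (intro exI[of _ "fs @ gs"]) (auto elim: A_coeffs_in_mono)
  qed
qed

lemma coeff_exp_prod_of_log_deriv:
  assumes "vanishes_below (Suc p) (log_deriv fs - A_plus_B)" and "length w \<le> p"
  shows "coeff (exp_prod fs) w = 1 / fact (length w)"
  using assms(2)
proof (induction w)
  case (Cons x w)
  have "vanishes_below (Suc p) ((log_deriv fs - A_plus_B) * exp_prod fs)"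
    using assms(1) by (rule vanishes_below_mult_left)
  then have "coeff ((log_deriv fs - A_plus_B) * exp_prod fs) (x # w) = 0"
    using Cons.prems by (intro vanishes_belowD) auto
  then have "coeff (degree_deriv (exp_prod fs)) (x # w) = coeff (A_plus_B * exp_prod fs) (x # w)"
    by (simp add: degree_deriv_exp_prod left_diff_distrib)
  also have "\<dots> = coeff (exp_prod fs) w"
    by (cases x) (simp_all add: A_plus_B_def distrib_right coeff_gen_times)
  finally have "of_nat (Suc (length w)) * coeff (exp_prod fs) (x # w) = 1 / fact (length w)"
    using Cons by simp
  then show ?case
    by (simp add: field_simps del: of_nat_Suc)
qed simp

lemma splitting_factors_Suc:
  "splitting_factors (Suc s) a b =
    (LB, b 0) # (LA, a 1) # splitting_factors s (\<lambda>i. a (Suc i)) (\<lambda>i. b (Suc i))"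
  by (simp add: splitting_factors_def upt_conv_Cons map_Suc_upt[symmetric] comp_def del: upt_Suc)

lemma exists_splitting_factors:
  assumes "A_coeffs_in S fs" "0 \<in> S"
  shows "\<exists>s a b. exp_prod (splitting_factors s a b) = exp_prod fs \<and> (\<forall>i\<in>{1..s}. a i \<in> S)"
  using assms(1)
proof (induction fs)
  case Nil
  show ?case
    by (rule exI[of _ 0], rule exI[of _ "\<lambda>_. 0"], rule exI[of _ "\<lambda>_. 0"])
      (simp add: splitting_factors_def)
next
  case (Cons xc fs)
  obtain x c where xc: "xc = (x, c)" by fastforce
  obtain s a b where ab: "exp_prod (splitting_factors s a b) = exp_prod fs" "\<forall>i\<in>{1..s}. a i \<in> S"
    using Cons xc by auto
  \<comment> \<open>A leading B-factor merges into b 0; a leading A-factor opens a new stage with b 0 = 0.\<close>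
  show ?case
  proof (cases x)
    case LA
    define a' where "a' i = (if i = 1 then c else a (i - 1))" for i
    define b' where "b' i = (if i = 0 then 0 else b (i - 1))" for i
    have "splitting_factors s (\<lambda>i. a' (Suc i)) (\<lambda>i. b' (Suc i)) = splitting_factors s a b"
      unfolding splitting_factors_def a'_def b'_def
      by (auto intro!: arg_cong[where f = concat] map_cong)
    then have "exp_prod (splitting_factors (Suc s) a' b') = exp_prod (xc # fs)"
      unfolding splitting_factors_Suc using ab(1) by (simp add: xc LA a'_def b'_def)
    moreover have "\<forall>i\<in>{1..Suc s}. a' i \<in> S"
      using ab(2) Cons.prems by (auto simp: a'_def xc LA Suc_le_eq)
    ultimately show ?thesis by blast
  next
    case LB
    define b' where "b' i = (if i = 0 then c + b 0 else b i)" for i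
    have tail: "map (\<lambda>i. [(LA, a i), (LB, b' i)]) [1..<s + 1] =
        map (\<lambda>i. [(LA, a i), (LB, b i)]) [1..<s + 1]"
      by (auto simp: b'_def)
    have "exp_prod (splitting_factors s a b') = exp_gen LB c * exp_prod (splitting_factors s a b)"
      unfolding splitting_factors_def tail by (simp add: b'_def exp_gen_add[symmetric] mult.assoc)
    then have "exp_prod (splitting_factors s a b') = exp_prod (xc # fs)"
      using ab(1) by (simp add: xc LB)
    with ab(2) show ?thesis by blast
  qed
qed

lemma exists_splitting_of_order:
  "\<exists>s a b. splitting_has_order p s a b \<and> (\<forall>i\<in>{1..s}. Re (a i) \<ge> 0)"
proof -
  obtain fs where fs: "A_coeffs_in {c. 0 \<le> Re c} fs" "vanishes_below (Suc p) (log_deriv fs - A_plus_B)"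
    using exists_log_deriv_approx by blast
  obtain s a b where ab: "exp_prod (splitting_factors s a b) = exp_prod fs" "\<forall>i\<in>{1..s}. Re (a i) \<ge> 0"
    using exists_splitting_factors[OF fs(1)] by auto
  have "splitting_has_order p s a b"
    unfolding splitting_has_order_def exact_coeff_def
    using coeff_exp_prod_of_log_deriv[OF fs(2)] by (simp flip: coeff_exp_prod add: ab(1))
  with ab(2) show ?thesis by blast
qed

theorem theorem2p4:
  shows "\<forall>p::nat. p \<le> 44 \<longrightarrow>
           (\<exists>(s::nat) (a::nat \<Rightarrow> complex) (b::nat \<Rightarrow> complex).
              splitting_has_order p s a b \<and> (\<forall>i\<in>{1..s}. Re (a i) \<ge> 0))"
  using exists_splitting_of_order by blast

end
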